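(* Let $f:[-1,1]\to\mathbb{R}$ be sampled through the noisy oracle described in the context, with heteroskedastic noise. Let $N+1$ be the total sample budget, choose $\hat N\ll N$, let $x_i=\cos(i\pi/\hat N)$, $i=0,\dots,\hat N$, be the Chebyshev points, and let $\sigma_i=\sigma(x_i)$, $\boldsymbol{\sigma}=(\sigma_0,\dots,\sigma_{\hat N})$. Let $p_n$ be the polynomial approximant of degree $n$ produced by the known-variance weighted sampling algorithm described in the context. Suppose each $\epsilon_{x_i}$ is subgaussian with parameter $\sigma_i$. Then for $N$ large, for any fixed $x\in[-1,1]$ and $t>0$, $$\mathbb{P}\left[|p_n(x)-f(x)|>2t\frac{\|\boldsymbol{\sigma}\|_2}{\sqrt{N\hat N}}\sqrt{n+1}+\left(\sqrt{8(n+1)}+1\right)\|r_n\|_\infty\right]\le 2\exp\left(-\frac{t^2}{2}\right),$$ where $r_n=f-p_n^*$ and $p_n^*$ is the best uniform approximation of $f$ on $[-1,1]$ by polynomials of degree at most $n$.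
   Context: Noise model: a sample of $f$ at $x\in[-1,1]$ returns $y=f(x)+\epsilon_x$, where $\epsilon_x$ has mean $0$ and variance $\sigma(x)^2$ for some function $\sigma(x)\ge 0$; noises at distinct points are independent, and repeated samples taken at the same $x$ are independent. A random variable $X$ is called subgaussian with parameter $\sigma$ if $\mathbb{P}(|X|\ge t)\le 2\exp(-t^2/\sigma^2)$ for all $t\ge 0$ (the paper identifies $\sigma^2$ with the variance of $X$). Known-variance weighted sampling algorithm (input: the oracle, the budget $N+1$, and $\sigma(x)$): at each Chebyshev point $x_i$, $0\le i\le \hat N$, take $k_i\ge 1$ samples with $k_i$ proportional to $\sigma_i^2$, namely $k_i=N\sigma_i^2/\|\boldsymbol{\sigma}\|_2^2$ (ignoring rounding, which is justified for $N$ large), and let $y_i$ be the average of these $k_i$ samples. Let $\hat p_{\hat N}(x)=\sum_{j=0}^{\hat N}c_jT_j(x)$ be the unique polynomial of degree $\le\hat N$ with $\hat p_{\hat N}(x_i)=y_i$, where $T_j$ are Chebyshev polynomials. A truncation degree $n<\hat N$ is selected (by Mallows' $C_p$ criterion), and the output is the truncation $p_n(x)=\sum_{j=0}^{n}c_jT_j(x)$. *)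

theory Defs
  imports "HOL-Probability.Probability" "HOL-Computational_Algebra.Polynomial"
begin

fun cheb_T :: "nat \<Rightarrow> real \<Rightarrow> real" where
  "cheb_T 0 x = 1"
| "cheb_T (Suc 0) x = x"
| "cheb_T (Suc (Suc m)) x = 2 * x * cheb_T (Suc m) x - cheb_T m x"

definition cheb_pt :: "nat \<Rightarrow> nat \<Rightarrow> real" where
  "cheb_pt Nh i = cos (real i * pi / real Nh)"

definition cheb_interp_coeffs :: "nat \<Rightarrow> (nat \<Rightarrow> real) \<Rightarrow> nat \<Rightarrow> real" where
  "cheb_interp_coeffs Nh y = (THE c. (\<forall>i\<le>Nh. (\<Sum>j\<le>Nh. c j * cheb_T j (cheb_pt Nh i)) = y i)
                                     \<and> (\<forall>j>Nh. c j = 0))"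

definition trunc_approx :: "nat \<Rightarrow> nat \<Rightarrow> (nat \<Rightarrow> real) \<Rightarrow> real \<Rightarrow> real" where
  "trunc_approx Nh n y x = (\<Sum>j\<le>n. cheb_interp_coeffs Nh y j * cheb_T j x)"

definition sample_avg :: "(real \<Rightarrow> nat \<Rightarrow> 'a \<Rightarrow> real) \<Rightarrow> nat \<Rightarrow> (nat \<Rightarrow> nat) \<Rightarrow> nat \<Rightarrow> 'a \<Rightarrow> real" where
  "sample_avg eps Nh k i \<omega> = (\<Sum>j<k i. eps (cheb_pt Nh i) j \<omega>) / real (k i)"

definition sup_dist :: "(real \<Rightarrow> real) \<Rightarrow> real poly \<Rightarrow> real" where
  "sup_dist f p = Sup ((\<lambda>x. \<bar>f x - poly p x\<bar>) ` {-1..1})"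

definition best_approx :: "(real \<Rightarrow> real) \<Rightarrow> nat \<Rightarrow> real poly" where
  "best_approx f n = (SOME p. degree p \<le> n \<and> (\<forall>q. degree q \<le> n \<longrightarrow> sup_dist f p \<le> sup_dist f q))"

definition subgaussian :: "'a measure \<Rightarrow> ('a \<Rightarrow> real) \<Rightarrow> real \<Rightarrow> bool" where
  "subgaussian M X s = (\<forall>t\<ge>0. measure M {\<omega>\<in>space M. \<bar>X \<omega>\<bar> \<ge> t} \<le> 2 * exp (- (t^2) / s^2))"

end

theory Submission
  imports Defs
begin

(* The truncated interpolant is linear in the data, p_n(x) = (\<Sum>i. y_i w_i(x)).  Discrete
   orthogonality of T_0, ..., T_Nh at the Chebyshev points (for the trapezoidal weights, which
   halve the two endpoints) shows that the weights w_i(x) reproduce polynomials of degree \<le> n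
   and satisfy (\<Sum>i. w_i(x)^2) \<le> 2(n+1)/Nh, hence (\<Sum>i. |w_i(x)|) \<le> sqrt(2(n+1)).
   Writing y_i = f(x_i) + noise, the noiseless part differs from f(x) by at most
   (1 + \<Sum>i. |w_i(x)|) ||f - p||, for every polynomial p of degree \<le> n (Lebesgue constant).
   The noise part (\<Sum>i. w_i/k_i \<Sum>j<k_i. \<epsilon>_ij) is a weighted sum of independent centred
   subgaussian variables, each with E exp(l \<epsilon>_ij) \<le> exp(l^2 \<sigma>_i^2); with k_i proportional to
   \<sigma>_i^2 its variance proxy is ||\<sigma>||^2/N (\<Sum>i. w_i^2) \<le> 2(n+1) ||\<sigma>||^2/(N Nh), and a
   Chernoff bound gives the Gaussian tail. *)

lemma cheb_T_cos: "cheb_T j (cos \<theta>) = cos (real j * \<theta>)"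
proof (induction j \<theta> rule: cheb_T.induct)
  case (3 m \<theta>)
  have "cos (real (Suc (Suc m)) * \<theta>) + cos (real m * \<theta>) = 2 * cos \<theta> * cos (real (Suc m) * \<theta>)"
    using cos_times_cos[of \<theta> "real (Suc m) * \<theta>"] by (simp add: algebra_simps)
  with 3 show ?case by simp
qed simp_all

lemma abs_cheb_T_le_1:
  assumes "\<bar>x\<bar> \<le> 1"
  shows "\<bar>cheb_T j x\<bar> \<le> 1"
  using cheb_T_cos[of j "arccos x"] assms by simp

lemma cheb_pt_in_interval [simp]: "cheb_pt L i \<in> {-1..1}"
  by (simp add: cheb_pt_def)

lemma cheb_T_cheb_pt: "cheb_T j (cheb_pt L i) = cos (real i * real j * pi / real L)"
  by (simp add: cheb_pt_def cheb_T_cos mult_ac)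

lemma inj_on_cheb_pt: "inj_on (cheb_pt L) {..L}"
proof (rule inj_onI)
  fix i j assume i: "i \<in> {..L}" and j: "j \<in> {..L}" and eq: "cheb_pt L i = cheb_pt L j"
  show "i = j"
  proof (cases "L = 0")
    case False
    have "0 \<le> real i * pi / real L" "real i * pi / real L \<le> pi"
      using i False by (auto simp: field_simps)
    moreover have "0 \<le> real j * pi / real L" "real j * pi / real L \<le> pi"
      using j False by (auto simp: field_simps)
    moreover have "cos (real i * pi / real L) = cos (real j * pi / real L)"
      using eq by (simp add: cheb_pt_def)
    ultimately have "real i * pi / real L = real j * pi / real L"
      by (rule cos_inj_pi)
    then show ?thesis using False by simp
  qed (use i j in simp)
qed

definition trap_weight :: "nat \<Rightarrow> nat \<Rightarrow> real" where
  "trap_weight L i = (if i = 0 \<or> i = L then 1/2 else 1)"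

lemma trap_weight_pos: "trap_weight L i > 0"
  and trap_weight_le_1: "trap_weight L i \<le> 1"
  by (auto simp: trap_weight_def)

lemma trap_weight_neq_0 [simp]: "trap_weight L i \<noteq> 0"
  using trap_weight_pos[of L i] by simp

lemma sum_trap_weight_mult:
  assumes "L > 0"
  shows "(\<Sum>i\<le>L. trap_weight L i * g i) = (\<Sum>i\<le>L. g i) - g 0 / 2 - g L / 2"
proof -
  have "(\<Sum>i\<le>L. trap_weight L i * g i)
      = (\<Sum>i\<le>L. g i - (if i = 0 then g 0 / 2 else 0) - (if i = L then g L / 2 else 0))"
    using assms by (intro sum.cong) (auto simp: trap_weight_def)
  also have "\<dots> = (\<Sum>i\<le>L. g i) - g 0 / 2 - g L / 2"
    by (simp add: sum_subtractf)
  finally show ?thesis .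
qed

lemma sum_trap_weight: "L > 0 \<Longrightarrow> (\<Sum>i\<le>L. trap_weight L i) = real L"
  using sum_trap_weight_mult[of L "\<lambda>_. 1"] by simp

lemma sin_half_mult_sum_cos:
  "2 * sin (\<theta>/2) * (\<Sum>i\<le>K. cos (real i * \<theta>)) = sin ((real K + 1/2) * \<theta>) + sin (\<theta>/2)"
proof (induction K)
  case (Suc K)
  have "sin ((real (Suc K) + 1/2) * \<theta>) - sin ((real K + 1/2) * \<theta>) = 2 * sin (\<theta>/2) * cos (real (Suc K) * \<theta>)"
    using sin_add[of "real (Suc K) * \<theta>" "\<theta>/2"] sin_diff[of "real (Suc K) * \<theta>" "\<theta>/2"]
    by (simp add: algebra_simps)
  with Suc show ?case by (simp add: algebra_simps)
qed simp

lemma trap_sum_cos: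
  assumes "L > 0" "m \<le> 2 * L"
  shows "(\<Sum>i\<le>L. trap_weight L i * cos (real i * real m * pi / real L))
       = (if m = 0 \<or> m = 2 * L then real L else 0)"
proof (cases "m = 0 \<or> m = 2 * L")
  case True
  then have "cos (real i * real m * pi / real L) = 1" for i
    using assms(1) cos_2npi[of i] by (auto simp: mult_ac)
  with True show ?thesis using sum_trap_weight[OF assms(1)] by simp
next
  case False
  define \<theta> where "\<theta> = real m * pi / real L"
  have "0 < \<theta>/2" "\<theta>/2 < pi"
    using False assms by (auto simp: \<theta>_def field_simps)
  then have sin_pos: "sin (\<theta>/2) > 0" by (rule sin_gt_zero)
  have "sin (real L * \<theta>) = 0"
    using assms(1) by (simp add: \<theta>_def)
  then have "2 * sin (\<theta>/2) * (\<Sum>i\<le>L. trap_weight L i * cos (real i * \<theta>)) = 0"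
    using sin_half_mult_sum_cos[of \<theta> L] sin_add[of "real L * \<theta>" "\<theta>/2"] assms(1)
    by (simp add: sum_trap_weight_mult algebra_simps)
  then show ?thesis
    using False sin_pos by (simp add: \<theta>_def mult.assoc)
qed

lemma cheb_T_mult_cheb_T_cheb_pt:
  assumes "k \<le> j"
  shows "cheb_T j (cheb_pt L i) * cheb_T k (cheb_pt L i)
       = (cos (real i * real (j - k) * pi / real L) + cos (real i * real (j + k) * pi / real L)) / 2"
  using assms cos_times_cos[of "real i * real j * pi / real L" "real i * real k * pi / real L"]
  by (simp add: cheb_T_cheb_pt diff_divide_distrib add_divide_distrib algebra_simps)

lemma cheb_discrete_orthogonality:
  assumes "L > 0" "j \<le> L" "k \<le> L"
  shows "(\<Sum>i\<le>L. trap_weight L i * cheb_T j (cheb_pt L i) * cheb_T k (cheb_pt L i))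
       = (if j = k then real L / (2 * trap_weight L j) else 0)"
proof -
  have ordered: "(\<Sum>i\<le>L. trap_weight L i * cheb_T j (cheb_pt L i) * cheb_T k (cheb_pt L i))
       = (if j = k then real L / (2 * trap_weight L j) else 0)" if "k \<le> j" "j \<le> L" for j k
  proof -
    have "(\<Sum>i\<le>L. trap_weight L i * cheb_T j (cheb_pt L i) * cheb_T k (cheb_pt L i))
        = (\<Sum>i\<le>L. (trap_weight L i * cos (real i * real (j - k) * pi / real L)
                  + trap_weight L i * cos (real i * real (j + k) * pi / real L)) / 2)"
      using cheb_T_mult_cheb_T_cheb_pt[OF that(1)]
      by (intro sum.cong refl) (simp only: mult.assoc, simp add: field_simps)
    also have "\<dots> = ((\<Sum>i\<le>L. trap_weight L i * cos (real i * real (j - k) * pi / real L))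
          + (\<Sum>i\<le>L. trap_weight L i * cos (real i * real (j + k) * pi / real L))) / 2"
      by (simp add: sum.distrib flip: sum_divide_distrib)
    also have "\<dots> = ((if j - k = 0 \<or> j - k = 2 * L then real L else 0)
                      + (if j + k = 0 \<or> j + k = 2 * L then real L else 0)) / 2"
      using that by (subst (1 2) trap_sum_cos[OF assms(1)]) simp_all
    also have "\<dots> = (if j = k then real L / (2 * trap_weight L j) else 0)"
      using that by (auto simp: trap_weight_def)
    finally show ?thesis .
  qed
  show ?thesis
  proof (cases "k \<le> j")
    case False
    then have "j \<le> k" by simp
    have "(\<Sum>i\<le>L. trap_weight L i * cheb_T j (cheb_pt L i) * cheb_T k (cheb_pt L i))
        = (\<Sum>i\<le>L. trap_weight L i * cheb_T k (cheb_pt L i) * cheb_T j (cheb_pt L i))"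
      by (simp only: ac_simps)
    also have "\<dots> = (if k = j then real L / (2 * trap_weight L k) else 0)"
      by (rule ordered[OF \<open>j \<le> k\<close> assms(3)])
    finally show ?thesis
      using False by auto
  qed (use ordered assms in blast)
qed

lemma trap_sum_cheb_expansion:
  assumes "L > 0" "m \<le> L" "k \<le> m"
  shows "(\<Sum>i\<le>L. trap_weight L i * cheb_T k (cheb_pt L i) * (\<Sum>j\<le>m. d j * cheb_T j (cheb_pt L i)))
       = d k * real L / (2 * trap_weight L k)"
proof -
  have "(\<Sum>i\<le>L. trap_weight L i * cheb_T k (cheb_pt L i) * (\<Sum>j\<le>m. d j * cheb_T j (cheb_pt L i)))
      = (\<Sum>j\<le>m. d j * (\<Sum>i\<le>L. trap_weight L i * cheb_T j (cheb_pt L i) * cheb_T k (cheb_pt L i)))"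
    unfolding sum_distrib_left sum_distrib_right by (subst sum.swap) (simp add: mult_ac)
  also have "\<dots> = (\<Sum>j\<le>m. if j = k then d k * real L / (2 * trap_weight L k) else 0)"
    using assms by (intro sum.cong refl) (simp add: cheb_discrete_orthogonality)
  also have "\<dots> = d k * real L / (2 * trap_weight L k)"
    using assms(3) by simp
  finally show ?thesis .
qed

definition cheb_coeff :: "nat \<Rightarrow> (nat \<Rightarrow> real) \<Rightarrow> nat \<Rightarrow> real" where
  "cheb_coeff L y j = (if j \<le> L
     then 2 * trap_weight L j / real L * (\<Sum>i\<le>L. trap_weight L i * y i * cheb_T j (cheb_pt L i))
     else 0)"

lemma cheb_coeff_interpolates:
  assumes "L > 0" "l \<le> L"
  shows "(\<Sum>j\<le>L. cheb_coeff L y j * cheb_T j (cheb_pt L l)) = y l"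
proof -
  have "(\<Sum>j\<le>L. cheb_coeff L y j * cheb_T j (cheb_pt L l))
      = (\<Sum>j\<le>L. \<Sum>i\<le>L. trap_weight L j * cheb_T l (cheb_pt L j)
                        * (2 * trap_weight L i * y i / real L * cheb_T i (cheb_pt L j)))"
    by (intro sum.cong refl)
      (simp add: cheb_coeff_def cheb_T_cheb_pt sum_distrib_left sum_distrib_right mult_ac)
  also have "\<dots> = (\<Sum>j\<le>L. trap_weight L j * cheb_T l (cheb_pt L j)
                        * (\<Sum>i\<le>L. 2 * trap_weight L i * y i / real L * cheb_T i (cheb_pt L j)))"
    by (simp add: sum_distrib_left)
  also have "\<dots> = y l"
    using trap_sum_cheb_expansion[OF assms(1) order_refl assms(2), of "\<lambda>i. 2 * trap_weight L i * y i / real L"]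
      assms(1) by simp
  finally show ?thesis .
qed

lemma cheb_interp_unique:
  assumes "L > 0" "\<forall>i\<le>L. (\<Sum>j\<le>L. d j * cheb_T j (cheb_pt L i)) = 0" "k \<le> L"
  shows "d k = 0"
proof -
  have "d k * real L / (2 * trap_weight L k) = 0"
    using trap_sum_cheb_expansion[OF assms(1) order_refl assms(3), of d] assms(2) by simp
  then show ?thesis
    using assms(1) trap_weight_pos[of L k] by simp
qed

lemma cheb_interp_coeffs_eq:
  assumes "L > 0"
  shows "cheb_interp_coeffs L y = cheb_coeff L y"
  unfolding cheb_interp_coeffs_def
proof (rule the_equality)
  show "(\<forall>i\<le>L. (\<Sum>j\<le>L. cheb_coeff L y j * cheb_T j (cheb_pt L i)) = y i) \<and> (\<forall>j>L. cheb_coeff L y j = 0)"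
    using cheb_coeff_interpolates[OF assms] by (simp add: cheb_coeff_def)
next
  fix c
  assume c: "(\<forall>i\<le>L. (\<Sum>j\<le>L. c j * cheb_T j (cheb_pt L i)) = y i) \<and> (\<forall>j>L. c j = 0)"
  have "c k = cheb_coeff L y k" for k
  proof (cases "k \<le> L")
    case True
    have "\<forall>i\<le>L. (\<Sum>j\<le>L. (c j - cheb_coeff L y j) * cheb_T j (cheb_pt L i)) = 0"
      using c cheb_coeff_interpolates[OF assms] by (simp add: left_diff_distrib sum_subtractf)
    from cheb_interp_unique[OF assms this True] show ?thesis by simp
  qed (use c in \<open>simp add: cheb_coeff_def\<close>)
  then show "c = cheb_coeff L y" ..
qed

definition trunc_weight :: "nat \<Rightarrow> nat \<Rightarrow> real \<Rightarrow> nat \<Rightarrow> real" where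
  "trunc_weight L n x i =
     2 / real L * trap_weight L i * (\<Sum>j\<le>n. trap_weight L j * cheb_T j (cheb_pt L i) * cheb_T j x)"

lemma trunc_approx_eq_sum_weights:
  assumes "L > 0" "n \<le> L"
  shows "trunc_approx L n y x = (\<Sum>i\<le>L. y i * trunc_weight L n x i)"
proof -
  have "trunc_approx L n y x
      = (\<Sum>j\<le>n. \<Sum>i\<le>L. y i * (2 / real L * trap_weight L i * (trap_weight L j * cheb_T j (cheb_pt L i) * cheb_T j x)))"
    unfolding trunc_approx_def cheb_interp_coeffs_eq[OF assms(1)] using assms(2)
    by (intro sum.cong refl) (auto simp: cheb_coeff_def sum_distrib_left sum_distrib_right mult_ac)
  also have "\<dots> = (\<Sum>i\<le>L. y i * trunc_weight L n x i)"
    by (subst sum.swap) (simp add: trunc_weight_def sum_distrib_left)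
  finally show ?thesis .
qed

lemma sum_cheb_expansion_mult_trunc_weight:
  assumes "L > 0" "n \<le> L"
  shows "(\<Sum>i\<le>L. (\<Sum>j\<le>n. a j * cheb_T j (cheb_pt L i)) * trunc_weight L n x i) = (\<Sum>j\<le>n. a j * cheb_T j x)"
proof -
  have "(\<Sum>i\<le>L. (\<Sum>j\<le>n. a j * cheb_T j (cheb_pt L i)) * trunc_weight L n x i)
      = (\<Sum>j\<le>n. 2 / real L * trap_weight L j * cheb_T j x
            * (\<Sum>i\<le>L. trap_weight L i * cheb_T j (cheb_pt L i) * (\<Sum>l\<le>n. a l * cheb_T l (cheb_pt L i))))"
    unfolding trunc_weight_def sum_distrib_left sum_distrib_right
    by (subst sum.swap) (simp add: mult_ac)
  also have "\<dots> = (\<Sum>j\<le>n. a j * cheb_T j x)"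
    using assms trap_weight_pos by (intro sum.cong refl) (simp add: trap_sum_cheb_expansion)
  finally show ?thesis .
qed

lemma trap_sum_cheb_expansion_sq:
  assumes "L > 0" "n \<le> L"
  shows "(\<Sum>i\<le>L. trap_weight L i * (\<Sum>j\<le>n. a j * cheb_T j (cheb_pt L i))\<^sup>2)
       = (\<Sum>j\<le>n. (a j)\<^sup>2 * real L / (2 * trap_weight L j))"
proof -
  have "(\<Sum>i\<le>L. trap_weight L i * (\<Sum>j\<le>n. a j * cheb_T j (cheb_pt L i))\<^sup>2)
      = (\<Sum>k\<le>n. a k * (\<Sum>i\<le>L. trap_weight L i * cheb_T k (cheb_pt L i) * (\<Sum>j\<le>n. a j * cheb_T j (cheb_pt L i))))"
    unfolding power2_eq_square sum_distrib_left sum_distrib_right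
    by (subst sum.swap) (simp add: mult_ac)
  also have "\<dots> = (\<Sum>k\<le>n. (a k)\<^sup>2 * real L / (2 * trap_weight L k))"
    using assms by (intro sum.cong refl) (simp add: trap_sum_cheb_expansion power2_eq_square)
  finally show ?thesis .
qed

lemma sum_trunc_weight_sq_div_le:
  assumes "L > 0" "n \<le> L" "\<bar>x\<bar> \<le> 1"
  shows "(\<Sum>i\<le>L. (trunc_weight L n x i)\<^sup>2 / trap_weight L i) \<le> 2 * (real n + 1) / real L"
proof -
  define a where "a j = trap_weight L j * cheb_T j x" for j
  have "(trunc_weight L n x i)\<^sup>2 / trap_weight L i
      = 4 / (real L)\<^sup>2 * (trap_weight L i * (\<Sum>j\<le>n. a j * cheb_T j (cheb_pt L i))\<^sup>2)" for i
    by (simp add: trunc_weight_def a_def power2_eq_square field_simps)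
  then have "(\<Sum>i\<le>L. (trunc_weight L n x i)\<^sup>2 / trap_weight L i)
      = 4 / (real L)\<^sup>2 * (\<Sum>i\<le>L. trap_weight L i * (\<Sum>j\<le>n. a j * cheb_T j (cheb_pt L i))\<^sup>2)"
    by (simp only: sum_distrib_left)
  also have "\<dots> = 4 / (real L)\<^sup>2 * (\<Sum>j\<le>n. (a j)\<^sup>2 * real L / (2 * trap_weight L j))"
    by (simp only: trap_sum_cheb_expansion_sq[OF assms(1,2)])
  also have "\<dots> = 2 / real L * (\<Sum>j\<le>n. trap_weight L j * (cheb_T j x)\<^sup>2)"
    unfolding sum_distrib_left using assms(1)
    by (intro sum.cong refl) (simp add: a_def power2_eq_square field_simps)
  also have "\<dots> \<le> 2 / real L * (\<Sum>j\<le>n. 1)"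
  proof (intro mult_left_mono sum_mono)
    fix j
    have "(cheb_T j x)\<^sup>2 \<le> 1"
      using abs_cheb_T_le_1[OF assms(3)] by (simp add: abs_square_le_1)
    then show "trap_weight L j * (cheb_T j x)\<^sup>2 \<le> 1"
      using trap_weight_le_1[of L j] trap_weight_pos[of L j] by (simp add: mult_le_one)
  qed simp
  finally show ?thesis by (simp add: algebra_simps)
qed

lemma sum_trunc_weight_sq_le:
  assumes "L > 0" "n \<le> L" "\<bar>x\<bar> \<le> 1"
  shows "(\<Sum>i\<le>L. (trunc_weight L n x i)\<^sup>2) \<le> 2 * (real n + 1) / real L"
proof -
  have "(trunc_weight L n x i)\<^sup>2 \<le> (trunc_weight L n x i)\<^sup>2 / trap_weight L i" for i
    using trap_weight_pos[of L i] trap_weight_le_1[of L i]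
    by (simp add: le_divide_eq mult_left_le)
  then have "(\<Sum>i\<le>L. (trunc_weight L n x i)\<^sup>2) \<le> (\<Sum>i\<le>L. (trunc_weight L n x i)\<^sup>2 / trap_weight L i)"
    by (intro sum_mono)
  also have "\<dots> \<le> 2 * (real n + 1) / real L"
    by (rule sum_trunc_weight_sq_div_le[OF assms])
  finally show ?thesis .
qed

lemma sum_abs_trunc_weight_le:
  assumes "L > 0" "n \<le> L" "\<bar>x\<bar> \<le> 1"
  shows "(\<Sum>i\<le>L. \<bar>trunc_weight L n x i\<bar>) \<le> sqrt (2 * (real n + 1))"
proof -
  let ?w = "trunc_weight L n x"
  have "(\<Sum>i\<le>L. \<bar>?w i\<bar>)\<^sup>2 = (\<Sum>i\<le>L. (\<bar>?w i\<bar> / sqrt (trap_weight L i)) * sqrt (trap_weight L i))\<^sup>2"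
    using trap_weight_pos by (simp add: less_imp_le)
  also have "\<dots> \<le> (\<Sum>i\<le>L. (\<bar>?w i\<bar> / sqrt (trap_weight L i))\<^sup>2) * (\<Sum>i\<le>L. (sqrt (trap_weight L i))\<^sup>2)"
    by (rule Cauchy_Schwarz_ineq_sum)
  also have "\<dots> = (\<Sum>i\<le>L. (?w i)\<^sup>2 / trap_weight L i) * real L"
    using trap_weight_pos sum_trap_weight[OF assms(1)] by (simp add: power_divide less_imp_le)
  also have "\<dots> \<le> 2 * (real n + 1) / real L * real L"
    using sum_trunc_weight_sq_div_le[OF assms] by (intro mult_right_mono) simp_all
  finally have "(\<Sum>i\<le>L. \<bar>?w i\<bar>)\<^sup>2 \<le> 2 * (real n + 1)"
    using assms(1) by simp
  then show ?thesis
    using real_le_rsqrt by blast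
qed

fun cheb_poly :: "nat \<Rightarrow> real poly" where
  "cheb_poly 0 = 1"
| "cheb_poly (Suc 0) = [:0, 1:]"
| "cheb_poly (Suc (Suc m)) = [:0, 2:] * cheb_poly (Suc m) - cheb_poly m"

lemma poly_cheb_poly [simp]: "poly (cheb_poly j) x = cheb_T j x"
  by (induction j rule: cheb_poly.induct) auto

lemma degree_cheb_poly_le: "degree (cheb_poly j) \<le> j"
proof (induction j rule: cheb_poly.induct)
  case (3 m)
  have "degree ([:0, 2:] * cheb_poly (Suc m)) \<le> Suc (Suc m)"
    using 3(1) degree_mult_le[of "[:0, 2:]" "cheb_poly (Suc m)"] by simp
  with 3(2) show ?case by (simp add: degree_diff_le)
qed auto

lemma lead_coeff_cheb_poly_Suc: "coeff (cheb_poly (Suc j)) (Suc j) = 2 ^ j"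
proof (induction j)
  case (Suc j)
  have "coeff (cheb_poly j) (Suc (Suc j)) = 0"
    using degree_cheb_poly_le[of j] by (intro coeff_eq_0) simp
  with Suc show ?case by simp
qed simp

definition cheb_sum :: "nat \<Rightarrow> (nat \<Rightarrow> real) \<Rightarrow> real poly" where
  "cheb_sum n a = (\<Sum>j\<le>n. smult (a j) (cheb_poly j))"

lemma poly_cheb_sum: "poly (cheb_sum n a) x = (\<Sum>j\<le>n. a j * cheb_T j x)"
  by (simp add: cheb_sum_def poly_sum)

lemma degree_cheb_sum_le: "degree (cheb_sum n a) \<le> n"
  unfolding cheb_sum_def
proof (rule degree_sum_le)
  fix j assume "j \<in> {..n}"
  then show "degree (smult (a j) (cheb_poly j)) \<le> n"
    using degree_cheb_poly_le[of j] degree_smult_le[of "a j" "cheb_poly j"] by simp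
qed simp

lemma ex_cheb_sum_eq:
  assumes "degree p \<le> n"
  shows "\<exists>a. p = cheb_sum n a"
  using assms
proof (induction n arbitrary: p)
  case 0
  then have "p = smult (coeff p 0) (cheb_poly 0)"
    by (simp add: degree_0_id)
  then show ?case
    by (intro exI[of _ "\<lambda>_. coeff p 0"]) (simp add: cheb_sum_def)
next
  case (Suc n)
  define c where "c = coeff p (Suc n) / 2 ^ n"
  define q where "q = p - smult c (cheb_poly (Suc n))"
  have "degree q \<le> n"
  proof (rule degree_le, intro allI impI)
    fix i assume "n < i"
    show "coeff q i = 0"
    proof (cases "i = Suc n")
      case False
      with \<open>n < i\<close> have "degree p < i" "degree (cheb_poly (Suc n)) < i"
        using Suc.prems degree_cheb_poly_le[of "Suc n"] by linarith+
      then show ?thesis by (simp add: q_def coeff_eq_0)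
    qed (simp add: q_def c_def lead_coeff_cheb_poly_Suc)
  qed
  then obtain a where a: "q = cheb_sum n a"
    using Suc.IH by blast
  have "p = cheb_sum (Suc n) (a(Suc n := c))"
  proof -
    have "cheb_sum n (a(Suc n := c)) = cheb_sum n a"
      unfolding cheb_sum_def by (intro sum.cong) auto
    then show ?thesis
      using a by (simp add: cheb_sum_def q_def)
  qed
  then show ?case by blast
qed

context
  fixes f :: "real \<Rightarrow> real"
  assumes cont_f: "continuous_on {-1..1} f"
begin

lemma bdd_above_abs_diff_poly: "bdd_above ((\<lambda>x. \<bar>f x - poly p x\<bar>) ` {-1..1})"
proof -
  have "compact ((\<lambda>x. \<bar>f x - poly p x\<bar>) ` {-1..1})"
    by (intro compact_continuous_image continuous_intros cont_f) auto
  then show ?thesis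
    by (intro bounded_imp_bdd_above compact_imp_bounded)
qed

lemma abs_diff_le_sup_dist: "y \<in> {-1..1} \<Longrightarrow> \<bar>f y - poly p y\<bar> \<le> sup_dist f p"
  unfolding sup_dist_def by (rule cSup_upper) (use bdd_above_abs_diff_poly in auto)

lemma sup_dist_le: "(\<And>y. y \<in> {-1..1} \<Longrightarrow> \<bar>f y - poly p y\<bar> \<le> B) \<Longrightarrow> sup_dist f p \<le> B"
  unfolding sup_dist_def by (rule cSup_least) auto

lemma sup_dist_nonneg: "sup_dist f p \<ge> 0"
  using abs_diff_le_sup_dist[of 0 p] by simp

lemma sup_dist_cheb_sum_le:
  "sup_dist f (cheb_sum n a) \<le> sup_dist f (cheb_sum n b) + (\<Sum>j\<le>n. \<bar>a j - b j\<bar>)"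
proof (rule sup_dist_le)
  fix y :: real assume y: "y \<in> {-1..1}"
  have "\<bar>poly (cheb_sum n a) y - poly (cheb_sum n b) y\<bar> = \<bar>\<Sum>j\<le>n. (a j - b j) * cheb_T j y\<bar>"
    by (simp add: poly_cheb_sum sum_subtractf left_diff_distrib)
  also have "\<dots> \<le> (\<Sum>j\<le>n. \<bar>a j - b j\<bar>)"
  proof (rule order_trans[OF sum_abs sum_mono])
    fix j
    have "\<bar>cheb_T j y\<bar> \<le> 1" using y by (intro abs_cheb_T_le_1) auto
    then show "\<bar>(a j - b j) * cheb_T j y\<bar> \<le> \<bar>a j - b j\<bar>"
      by (simp add: abs_mult mult_left_le)
  qed
  finally show "\<bar>f y - poly (cheb_sum n a) y\<bar> \<le> sup_dist f (cheb_sum n b) + (\<Sum>j\<le>n. \<bar>a j - b j\<bar>)"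
    using abs_diff_le_sup_dist[OF y, of "cheb_sum n b"] by linarith
qed

lemma continuous_on_sup_dist_cheb_sum: "continuous_on K (\<lambda>a. sup_dist f (cheb_sum n a))"
  unfolding continuous_on_def
proof (intro ballI)
  fix a assume "a \<in> K"
  define G where "G b = (\<Sum>j\<le>n. \<bar>b j - a j\<bar>)" for b :: "nat \<Rightarrow> real"
  have "continuous_on UNIV G"
    unfolding G_def by (intro continuous_intros continuous_on_product_coordinates)
  then have "(G \<longlongrightarrow> G a) (at a within K)"
    by (meson UNIV_I continuous_on_def tendsto_within_subset top_greatest)
  then have G_lim: "(G \<longlongrightarrow> 0) (at a within K)"
    by (simp add: G_def)
  have "norm (sup_dist f (cheb_sum n b) - sup_dist f (cheb_sum n a)) \<le> G b" for b
    using sup_dist_cheb_sum_le[of n a b] sup_dist_cheb_sum_le[of n b a]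
    by (simp add: G_def abs_minus_commute)
  then have "((\<lambda>b. sup_dist f (cheb_sum n b) - sup_dist f (cheb_sum n a)) \<longlongrightarrow> 0) (at a within K)"
    by (intro Lim_null_comparison[OF always_eventually G_lim]) auto
  then show "((\<lambda>b. sup_dist f (cheb_sum n b)) \<longlongrightarrow> sup_dist f (cheb_sum n a)) (at a within K)"
    by (simp add: LIM_zero_iff)
qed

end

lemma abs_cheb_coeff_le:
  assumes bounded: "\<forall>y\<in>{-1..1}. \<bar>poly (cheb_sum n a) y\<bar> \<le> B" and "k \<le> n"
  shows "\<bar>a k\<bar> \<le> 2 * B"
proof -
  define L where "L = Suc n"
  have L: "L > 0" "n \<le> L" by (auto simp: L_def)
  have "B \<ge> 0" using bounded by force
  have "\<bar>a k\<bar> * real L / (2 * trap_weight L k)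
      = \<bar>\<Sum>i\<le>L. trap_weight L i * cheb_T k (cheb_pt L i) * poly (cheb_sum n a) (cheb_pt L i)\<bar>"
    using trap_sum_cheb_expansion[OF L assms(2), of a] trap_weight_pos[of L k]
    by (simp add: poly_cheb_sum abs_mult)
  also have "\<dots> \<le> (\<Sum>i\<le>L. trap_weight L i * B)"
  proof (rule order_trans[OF sum_abs sum_mono])
    fix i
    have "\<bar>cheb_T k (cheb_pt L i) * poly (cheb_sum n a) (cheb_pt L i)\<bar> \<le> 1 * B"
      unfolding abs_mult using bounded \<open>B \<ge> 0\<close>
      by (intro mult_mono abs_cheb_T_le_1) (auto simp: cheb_pt_def)
    then show "\<bar>trap_weight L i * cheb_T k (cheb_pt L i) * poly (cheb_sum n a) (cheb_pt L i)\<bar>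
        \<le> trap_weight L i * B"
      using trap_weight_pos[of L i] by (simp add: abs_mult mult.assoc mult_left_mono)
  qed
  also have "\<dots> = real L * B"
    using sum_trap_weight[OF L(1)] by (simp flip: sum_distrib_right)
  finally have "\<bar>a k\<bar> \<le> 2 * trap_weight L k * B"
    using L trap_weight_pos[of L k] by (simp add: field_simps)
  also have "\<dots> \<le> 2 * B"
    using mult_left_le_one_le[OF \<open>B \<ge> 0\<close> less_imp_le[OF trap_weight_pos] trap_weight_le_1] by simp
  finally show ?thesis .
qed

lemma ex_cheb_sum_eq_bounded:
  assumes "degree q \<le> n" "\<forall>y\<in>{-1..1}. \<bar>poly q y\<bar> \<le> B"
  shows "\<exists>b. q = cheb_sum n b \<and> (\<forall>j\<le>n. \<bar>b j\<bar> \<le> 2 * B) \<and> (\<forall>j>n. b j = 0)"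
proof -
  obtain a where a: "q = cheb_sum n a"
    using ex_cheb_sum_eq[OF assms(1)] by blast
  define b where "b j = (if j \<le> n then a j else 0)" for j
  have "q = cheb_sum n b"
    unfolding a cheb_sum_def b_def by (intro sum.cong) auto
  moreover have "\<bar>b j\<bar> \<le> 2 * B" if "j \<le> n" for j
    using abs_cheb_coeff_le[of n b B j] that assms(2) \<open>q = cheb_sum n b\<close> by simp
  ultimately show ?thesis
    by (intro exI[of _ b]) (simp add: b_def)
qed

lemma best_approx_exists:
  assumes cont_f: "continuous_on {-1..1} f"
  shows "\<exists>p. degree p \<le> n \<and> (\<forall>q. degree q \<le> n \<longrightarrow> sup_dist f p \<le> sup_dist f q)"
proof -
  define D where "D = sup_dist f 0"
  have "D \<ge> 0" unfolding D_def by (rule sup_dist_nonneg[OF cont_f])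
  define K where "K = PiE UNIV (\<lambda>j. if j \<le> n then {-4 * D..4 * D} else {0::real})"
  have "compactin (product_topology (\<lambda>_. euclidean) UNIV) K"
    unfolding K_def compactin_PiE by auto
  then have "compact K" by (simp add: euclidean_product_topology)
  moreover have zero_in_K: "(\<lambda>_. 0) \<in> K" using \<open>D \<ge> 0\<close> by (auto simp: K_def)
  ultimately obtain a where a: "a \<in> K" "\<forall>b\<in>K. sup_dist f (cheb_sum n a) \<le> sup_dist f (cheb_sum n b)"
    using continuous_attains_inf[OF _ _ continuous_on_sup_dist_cheb_sum[OF cont_f]] by blast
  have "sup_dist f (cheb_sum n a) \<le> D"
    using a(2) zero_in_K by (force simp: D_def cheb_sum_def)
  have "sup_dist f (cheb_sum n a) \<le> sup_dist f q" if deg_q: "degree q \<le> n" for q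
  proof (cases "sup_dist f q \<le> D")
    case True
    have "\<bar>poly q y\<bar> \<le> 2 * D" if "y \<in> {-1..1}" for y
      using abs_diff_le_sup_dist[OF cont_f that, of 0] abs_diff_le_sup_dist[OF cont_f that, of q] True
      by (simp add: D_def)
    then obtain b where b: "q = cheb_sum n b" "\<forall>j\<le>n. \<bar>b j\<bar> \<le> 4 * D" "\<forall>j>n. b j = 0"
      using ex_cheb_sum_eq_bounded[OF deg_q, of "2 * D"] by auto
    then have "b \<in> K"
      using b by (auto simp: K_def PiE_iff abs_le_iff minus_le_iff)
    then show ?thesis
      using a(2) b(1) by blast
  qed (use \<open>sup_dist f (cheb_sum n a) \<le> D\<close> in simp)
  then show ?thesis
    using degree_cheb_sum_le by blast
qed

lemma degree_best_approx:
  "continuous_on {-1..1} f \<Longrightarrow> degree (best_approx f n) \<le> n"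
  unfolding best_approx_def using someI_ex[OF best_approx_exists] by blast

lemma trunc_interp_error_le:
  assumes cont_f: "continuous_on {-1..1} f"
    and "L > 0" "n \<le> L" "degree p \<le> n" "x \<in> {-1..1}"
  shows "\<bar>(\<Sum>i\<le>L. f (cheb_pt L i) * trunc_weight L n x i) - f x\<bar>
       \<le> (sqrt (2 * (real n + 1)) + 1) * sup_dist f p"
proof -
  let ?w = "trunc_weight L n x" and ?R = "sup_dist f p"
  obtain a where "p = cheb_sum n a"
    using ex_cheb_sum_eq[OF assms(4)] by blast
  then have reproduces: "(\<Sum>i\<le>L. poly p (cheb_pt L i) * ?w i) = poly p x"
    using sum_cheb_expansion_mult_trunc_weight[OF assms(2,3)] by (simp add: poly_cheb_sum)
  have "\<bar>\<Sum>i\<le>L. (f (cheb_pt L i) - poly p (cheb_pt L i)) * ?w i\<bar> \<le> (\<Sum>i\<le>L. ?R * \<bar>?w i\<bar>)"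
    using abs_diff_le_sup_dist[OF cont_f cheb_pt_in_interval]
    by (intro order_trans[OF sum_abs sum_mono]) (simp add: abs_mult mult_right_mono)
  also have "\<dots> = ?R * (\<Sum>i\<le>L. \<bar>?w i\<bar>)"
    by (simp add: sum_distrib_left)
  also have "\<dots> \<le> ?R * sqrt (2 * (real n + 1))"
    using sum_abs_trunc_weight_le[OF assms(2,3)] assms(5)
    by (intro mult_left_mono sup_dist_nonneg[OF cont_f]) auto
  finally have "\<bar>(\<Sum>i\<le>L. f (cheb_pt L i) * ?w i) - poly p x\<bar> \<le> ?R * sqrt (2 * (real n + 1))"
    by (simp add: reproduces[symmetric] left_diff_distrib sum_subtractf)
  moreover have "\<bar>f x - poly p x\<bar> \<le> ?R"
    by (rule abs_diff_le_sup_dist[OF cont_f assms(5)])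
  moreover have "(sqrt (2 * (real n + 1)) + 1) * ?R = ?R * sqrt (2 * (real n + 1)) + ?R"
    by (simp add: algebra_simps)
  ultimately show ?thesis
    by linarith
qed

lemma exp_le_taylor2_of_nonpos:
  fixes y :: real
  assumes "y \<le> 0"
  shows "exp y \<le> 1 + y + y\<^sup>2 / 2"
proof -
  have "1 + 0 + 0\<^sup>2 / 2 - exp 0 \<le> 1 + y + y\<^sup>2 / 2 - exp y"
  proof (rule DERIV_nonpos_imp_nonincreasing[OF assms])
    fix t :: real
    assume "y \<le> t" "t \<le> 0"
    then show "\<exists>d. ((\<lambda>t. 1 + t + t\<^sup>2 / 2 - exp t) has_real_derivative d) (at t) \<and> d \<le> 0"
      by (intro exI[of _ "1 + t - exp t"]) (auto intro!: derivative_eq_intros)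
  qed
  then show ?thesis by simp
qed

lemma exp_le_mult_exp_sq_quarter:
  fixes y :: real
  assumes "y \<ge> 0"
  shows "exp y \<le> (2 + y\<^sup>2) * exp (y\<^sup>2 / 4)"
proof (cases "y \<ge> 1")
  case True
  have "y \<le> y\<^sup>2 / 4 + 1"
    using zero_le_power2[of "y/2 - 1"] by (simp add: power2_eq_square field_simps)
  then have "exp y \<le> exp 1 * exp (y\<^sup>2 / 4)"
    by (simp flip: exp_add)
  also have "\<dots> \<le> (2 + y\<^sup>2) * exp (y\<^sup>2 / 4)"
    using exp_le one_le_power[OF True, of 2] by (intro mult_right_mono) auto
  finally show ?thesis .
next
  case False
  have "exp y \<le> 1 + y + y\<^sup>2"
    using exp_bound[of y] assms False by simp
  also have "\<dots> \<le> (2 + y\<^sup>2) * (1 + y\<^sup>2 / 4)"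
    using zero_le_power2[of "y - 1"] zero_le_power2[of "y\<^sup>2"]
    by (simp add: power2_eq_square field_simps)
  also have "\<dots> \<le> (2 + y\<^sup>2) * exp (y\<^sup>2 / 4)"
    by (intro mult_left_mono) (auto simp: add.commute)
  finally show ?thesis .
qed

lemma exp_le_add_exp_sq_quarter:
  fixes y :: real
  shows "exp y \<le> 1 + y + 4 * (exp (y\<^sup>2 / 4) - 1)"
proof (cases "y \<ge> 0")
  case False
  have "exp y \<le> 1 + y + y\<^sup>2 / 2"
    using False by (intro exp_le_taylor2_of_nonpos) simp
  also have "y\<^sup>2 / 2 \<le> 4 * (exp (y\<^sup>2 / 4) - 1)"
    using exp_ge_add_one_self[of "y\<^sup>2 / 4"] zero_le_power2[of y]
    unfolding right_diff_distrib by linarith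
  finally show ?thesis by simp
next
  case True
  \<comment> \<open>h 0 = h' 0 = 0, and h'' \<ge> 0 on [0, \<infinity>) is \<open>exp_le_mult_exp_sq_quarter\<close>.\<close>
  define h' where "h' t = 2 * t * exp (t\<^sup>2 / 4) + 1 - exp t" for t :: real
  define h where "h t = 4 * exp (t\<^sup>2 / 4) - 3 + t - exp t" for t :: real
  have "h' 0 \<le> h' t" if "t \<ge> 0" for t
  proof (rule DERIV_nonneg_imp_nondecreasing[OF that])
    fix u :: real assume "0 \<le> u"
    then show "\<exists>d. (h' has_real_derivative d) (at u) \<and> d \<ge> 0"
      using exp_le_mult_exp_sq_quarter[of u] unfolding h'_def
      by (intro exI[of _ "(2 + u\<^sup>2) * exp (u\<^sup>2 / 4) - exp u"])
        (auto intro!: derivative_eq_intros simp: algebra_simps power2_eq_square)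
  qed
  then have "h 0 \<le> h y"
  proof (intro DERIV_nonneg_imp_nondecreasing[OF True])
    fix u :: real assume "\<And>t. 0 \<le> t \<Longrightarrow> h' 0 \<le> h' t" "0 \<le> u"
    then show "\<exists>d. (h has_real_derivative d) (at u) \<and> d \<ge> 0"
      unfolding h_def by (intro exI[of _ "h' u"])
        (auto intro!: derivative_eq_intros simp: h'_def algebra_simps power2_eq_square)
  qed
  then show ?thesis by (simp add: h_def)
qed

lemma rational_bound_le_exp:
  fixes u :: real
  assumes "0 \<le> u" "u \<le> 9/4"
  shows "1 + u + 2 * u\<^sup>2 / (4 - u) \<le> exp u"
proof -
  obtain \<xi> where "exp u = (\<Sum>m<6. u ^ m / fact m) + exp \<xi> / fact 6 * u ^ 6"
    using Maclaurin_exp_le[of u 6] by blast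
  then have taylor: "1 + u + u\<^sup>2/2 + u^3/6 + u^4/24 + u^5/120 \<le> exp u"
    using assms(1) by (simp add: numeral_eq_Suc fact_numeral)
  have "u^3 * (u\<^sup>2 + u^3) \<le> u^3 * 20"
  proof (intro mult_left_mono)
    have "u\<^sup>2 \<le> (9/4)\<^sup>2" "u^3 \<le> (9/4)^3"
      using assms by (intro power_mono; simp)+
    then have "u\<^sup>2 \<le> 81/16" "u^3 \<le> 729/64"
      by (simp_all add: power2_eq_square power3_eq_cube)
    then show "u\<^sup>2 + u^3 \<le> 20" by simp
  qed (use assms in simp)
  moreover have "(u\<^sup>2/2 + u^3/6 + u^4/24 + u^5/120) * (4 - u) = 2 * u\<^sup>2 + (20 * u^3 - u^3 * (u\<^sup>2 + u^3)) / 120"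
    by algebra
  ultimately have "2 * u\<^sup>2 \<le> (u\<^sup>2/2 + u^3/6 + u^4/24 + u^5/120) * (4 - u)"
    by simp
  then have "2 * u\<^sup>2 / (4 - u) \<le> u\<^sup>2/2 + u^3/6 + u^4/24 + u^5/120"
    using assms by (simp add: divide_le_eq)
  with taylor show ?thesis by linarith
qed

lemma three_le_exp_nine_eighths: "3 \<le> exp (9/8 :: real)"
proof -
  have "(1 + 3/8 + (3/8)\<^sup>2/2 :: real)^3 \<le> exp (3/8) ^ 3"
    using exp_lower_Taylor_quadratic[of "3/8"] by (intro power_mono) auto
  also have "exp (3/8 :: real) ^ 3 = exp (9/8)"
    by (simp flip: exp_of_nat_mult)
  finally show ?thesis
    by (simp add: power3_eq_cube power2_eq_square)
qed

lemma exp_mult_le_exp_sq_half: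
  fixes a b :: real
  shows "exp (a * b) \<le> exp (a\<^sup>2 / 2) * exp (b\<^sup>2 / 2)"
  using zero_le_power2[of "a - b"] by (simp add: power2_eq_square algebra_simps flip: exp_add)

lemma exp_neg_sq_tendsto_0:
  fixes c :: real
  assumes "c > 0"
  shows "((\<lambda>u. exp (- (c * u\<^sup>2))) \<longlongrightarrow> 0) at_top"
proof -
  have "filterlim (\<lambda>u::real. c * u\<^sup>2) at_top at_top"
    using assms by (intro filterlim_tendsto_pos_mult_at_top[OF tendsto_const] filterlim_pow_at_top
        filterlim_ident) auto
  then have "filterlim (\<lambda>u::real. - (c * u\<^sup>2)) at_bot at_top"
    by (simp add: filterlim_uminus_at_top)
  then show ?thesis
    by (rule filterlim_compose[OF exp_at_bot])
qed

context prob_space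
begin

lemma nn_integral_layer_cake:
  fixes X :: "'a \<Rightarrow> real" and \<phi> \<phi>' :: "real \<Rightarrow> real"
  assumes [measurable]: "X \<in> borel_measurable M" "\<phi>' \<in> borel_measurable borel"
    and deriv: "\<And>u. u \<ge> 0 \<Longrightarrow> (\<phi> has_real_derivative \<phi>' u) (at u)"
    and nonneg: "\<And>u. u \<ge> 0 \<Longrightarrow> \<phi>' u \<ge> 0"
    and "\<phi> 0 = 0"
  shows "(\<integral>\<^sup>+\<omega>. ennreal (\<phi> \<bar>X \<omega>\<bar>) \<partial>M) =
         (\<integral>\<^sup>+u. ennreal (\<phi>' u) * indicator {0..} u * emeasure M {\<omega>\<in>space M. u \<le> \<bar>X \<omega>\<bar>} \<partial>lborel)"
proof -
  interpret pair_sigma_finite M lborel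
    by (simp add: pair_sigma_finite.intro lborel.sigma_finite_measure_axioms sigma_finite_measure_axioms)
  define g where "g \<omega> u = ennreal (\<phi>' u * (if 0 \<le> u \<and> u \<le> \<bar>X \<omega>\<bar> then 1 else 0))" for \<omega> u
  have g_measurable: "case_prod g \<in> borel_measurable (M \<Otimes>\<^sub>M lborel)"
    unfolding g_def by measurable
  have "(\<integral>\<^sup>+\<omega>. ennreal (\<phi> \<bar>X \<omega>\<bar>) \<partial>M) = (\<integral>\<^sup>+\<omega>. (\<integral>\<^sup>+u. g \<omega> u \<partial>lborel) \<partial>M)"
  proof (intro nn_integral_cong)
    fix \<omega>
    have "(\<integral>\<^sup>+u. g \<omega> u \<partial>lborel) = (\<integral>\<^sup>+u. ennreal (\<phi>' u) * indicator {0..\<bar>X \<omega>\<bar>} u \<partial>lborel)"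
      by (intro nn_integral_cong) (auto simp: g_def indicator_def)
    also have "\<dots> = \<phi> \<bar>X \<omega>\<bar> - \<phi> 0"
      by (rule nn_integral_FTC_Icc) (use deriv nonneg in auto)
    finally show "ennreal (\<phi> \<bar>X \<omega>\<bar>) = (\<integral>\<^sup>+u. g \<omega> u \<partial>lborel)"
      using \<open>\<phi> 0 = 0\<close> by simp
  qed
  also have "\<dots> = (\<integral>\<^sup>+u. (\<integral>\<^sup>+\<omega>. g \<omega> u \<partial>M) \<partial>lborel)"
    using Fubini'[OF g_measurable] by simp
  also have "\<dots> = (\<integral>\<^sup>+u. ennreal (\<phi>' u) * indicator {0..} u * emeasure M {\<omega>\<in>space M. u \<le> \<bar>X \<omega>\<bar>} \<partial>lborel)"
  proof (intro nn_integral_cong)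
    fix u :: real
    have "(\<integral>\<^sup>+\<omega>. g \<omega> u \<partial>M)
        = (\<integral>\<^sup>+\<omega>. ennreal (\<phi>' u) * indicator {0..} u * indicator {\<omega>\<in>space M. u \<le> \<bar>X \<omega>\<bar>} \<omega> \<partial>M)"
      by (intro nn_integral_cong) (auto simp: g_def indicator_def)
    also have "\<dots> = ennreal (\<phi>' u) * indicator {0..} u * emeasure M {\<omega>\<in>space M. u \<le> \<bar>X \<omega>\<bar>}"
      by (rule nn_integral_cmult_indicator) measurable
    finally show "(\<integral>\<^sup>+\<omega>. g \<omega> u \<partial>M)
        = ennreal (\<phi>' u) * indicator {0..} u * emeasure M {\<omega>\<in>space M. u \<le> \<bar>X \<omega>\<bar>}" .
  qed
  finally show ?thesis .
qed

(* E \<phi>(|X|) = \<integral>\<^sub>0\<^sup>\<infinity> \<phi>'(u) P(|X| \<ge> u) du \<le> \<integral>\<^sub>0\<^sup>\<infinity> \<phi>'(u) 2 exp(-u^2) du = T - G 0 *)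
lemma nn_integral_subgaussian_le:
  fixes X :: "'a \<Rightarrow> real" and \<phi> \<phi>' G :: "real \<Rightarrow> real"
  assumes [measurable]: "X \<in> borel_measurable M" "\<phi>' \<in> borel_measurable borel"
    and subg: "subgaussian M X 1"
    and deriv: "\<And>u. u \<ge> 0 \<Longrightarrow> (\<phi> has_real_derivative \<phi>' u) (at u)"
    and nonneg: "\<And>u. u \<ge> 0 \<Longrightarrow> \<phi>' u \<ge> 0"
    and "\<phi> 0 = 0"
    and deriv_G: "\<And>u. u \<ge> 0 \<Longrightarrow> (G has_real_derivative \<phi>' u * (2 * exp (- u\<^sup>2))) (at u)"
    and lim_G: "(G \<longlongrightarrow> T) at_top"
  shows "(\<integral>\<^sup>+\<omega>. ennreal (\<phi> \<bar>X \<omega>\<bar>) \<partial>M) \<le> ennreal (T - G 0)"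
proof -
  have "(\<integral>\<^sup>+\<omega>. ennreal (\<phi> \<bar>X \<omega>\<bar>) \<partial>M) =
        (\<integral>\<^sup>+u. ennreal (\<phi>' u) * indicator {0..} u * emeasure M {\<omega>\<in>space M. u \<le> \<bar>X \<omega>\<bar>} \<partial>lborel)"
    by (rule nn_integral_layer_cake) (use assms in auto)
  also have "\<dots> \<le> (\<integral>\<^sup>+u. ennreal (\<phi>' u * (2 * exp (- u\<^sup>2))) * indicator {0..} u \<partial>lborel)"
  proof (intro nn_integral_mono)
    fix u :: real
    show "ennreal (\<phi>' u) * indicator {0..} u * emeasure M {\<omega>\<in>space M. u \<le> \<bar>X \<omega>\<bar>}
          \<le> ennreal (\<phi>' u * (2 * exp (- u\<^sup>2))) * indicator {0..} u"
    proof (cases "u \<ge> 0")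
      case True
      have "emeasure M {\<omega>\<in>space M. u \<le> \<bar>X \<omega>\<bar>} \<le> ennreal (2 * exp (- u\<^sup>2))"
        using subg True by (simp add: subgaussian_def emeasure_eq_measure)
      then have "ennreal (\<phi>' u) * emeasure M {\<omega>\<in>space M. u \<le> \<bar>X \<omega>\<bar>}
          \<le> ennreal (\<phi>' u) * ennreal (2 * exp (- u\<^sup>2))"
        by (intro mult_left_mono) auto
      then show ?thesis
        using True nonneg[OF True] by (simp add: ennreal_mult mult_ac)
    qed simp
  qed
  also have "\<dots> = ennreal (T - G 0)"
    by (rule nn_integral_FTC_atLeast[OF _ deriv_G _ lim_G]) (use nonneg in auto)
  finally show ?thesis .
qed

lemma nn_integral_exp_sq_half_le:
  assumes [measurable]: "X \<in> borel_measurable M" and subg: "subgaussian M X 1"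
  shows "(\<integral>\<^sup>+\<omega>. ennreal (exp ((X \<omega>)\<^sup>2 / 2)) \<partial>M) \<le> 3"
proof -
  define G where "G u = - 2 * exp (- (1/2 * u\<^sup>2))" for u :: real
  have "(\<integral>\<^sup>+\<omega>. ennreal ((\<lambda>v. exp (v\<^sup>2 / 2) - 1) \<bar>X \<omega>\<bar>) \<partial>M) \<le> ennreal (0 - G 0)"
  proof (rule nn_integral_subgaussian_le[OF _ _ subg, where \<phi>' = "\<lambda>u. u * exp (u\<^sup>2 / 2)"])
    show "((\<lambda>v. exp (v\<^sup>2 / 2) - 1) has_real_derivative u * exp (u\<^sup>2 / 2)) (at u)" for u
      by (auto intro!: derivative_eq_intros simp: power2_eq_square)
    have "exp (u\<^sup>2 / 2) * exp (- u\<^sup>2) = exp (- (1/2 * u\<^sup>2))" for u :: real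
      by (simp flip: exp_add)
    then show "(G has_real_derivative u * exp (u\<^sup>2 / 2) * (2 * exp (- u\<^sup>2))) (at u)" for u
      unfolding G_def by (auto intro!: derivative_eq_intros simp: algebra_simps power2_eq_square)
    show "(G \<longlongrightarrow> 0) at_top"
      unfolding G_def using tendsto_mult[OF tendsto_const[of "-2"] exp_neg_sq_tendsto_0[of "1/2"]] by simp
  qed auto
  then have remainder: "(\<integral>\<^sup>+\<omega>. ennreal (exp ((X \<omega>)\<^sup>2 / 2) - 1) \<partial>M) \<le> 2"
    by (simp add: G_def)
  have "(\<integral>\<^sup>+\<omega>. ennreal (exp ((X \<omega>)\<^sup>2 / 2)) \<partial>M)
      = (\<integral>\<^sup>+\<omega>. ennreal (exp ((X \<omega>)\<^sup>2 / 2) - 1) + 1 \<partial>M)"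
    using ennreal_plus[of "exp ((X _)\<^sup>2 / 2) - 1" 1] by (intro nn_integral_cong) simp
  also have "\<dots> = (\<integral>\<^sup>+\<omega>. ennreal (exp ((X \<omega>)\<^sup>2 / 2) - 1) \<partial>M) + 1"
    by (subst nn_integral_add) (auto simp: emeasure_space_1)
  also have "\<dots> \<le> 2 + 1"
    using remainder by (intro add_right_mono)
  finally show ?thesis by simp
qed

lemma nn_integral_exp_sq_remainder_le:
  assumes [measurable]: "X \<in> borel_measurable M" and subg: "subgaussian M X 1"
    and "0 < \<theta>" "\<theta> < 1"
  shows "(\<integral>\<^sup>+\<omega>. ennreal (exp (\<theta> * (X \<omega>)\<^sup>2) - 1 - \<theta> * (X \<omega>)\<^sup>2) \<partial>M) \<le> ennreal (2 * \<theta>\<^sup>2 / (1 - \<theta>))"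
proof -
  define a where "a = 2 * \<theta> / (1 - \<theta>)"
  define G where "G u = - a * exp (- ((1 - \<theta>) * u\<^sup>2)) + 2 * \<theta> * exp (- u\<^sup>2)" for u
  have "(\<integral>\<^sup>+\<omega>. ennreal ((\<lambda>v. exp (\<theta> * v\<^sup>2) - 1 - \<theta> * v\<^sup>2) \<bar>X \<omega>\<bar>) \<partial>M) \<le> ennreal (0 - G 0)"
  proof (rule nn_integral_subgaussian_le[OF _ _ subg, where \<phi>' = "\<lambda>u. 2 * \<theta> * u * (exp (\<theta> * u\<^sup>2) - 1)"])
    show "((\<lambda>v. exp (\<theta> * v\<^sup>2) - 1 - \<theta> * v\<^sup>2) has_real_derivative 2 * \<theta> * u * (exp (\<theta> * u\<^sup>2) - 1)) (at u)" for u
      by (auto intro!: derivative_eq_intros simp: power2_eq_square algebra_simps)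
    show "0 \<le> 2 * \<theta> * u * (exp (\<theta> * u\<^sup>2) - 1)" if "0 \<le> u" for u
      using that \<open>0 < \<theta>\<close> by simp
    show "(G has_real_derivative 2 * \<theta> * u * (exp (\<theta> * u\<^sup>2) - 1) * (2 * exp (- u\<^sup>2))) (at u)" for u
    proof -
      have "(G has_real_derivative a * (exp (- ((1 - \<theta>) * u\<^sup>2)) * ((1 - \<theta>) * (2 * u)))
                                   + 2 * \<theta> * (exp (- u\<^sup>2) * (- (2 * u)))) (at u)"
        unfolding G_def by (auto intro!: derivative_eq_intros simp: power2_eq_square)
      moreover have "exp (- ((1 - \<theta>) * u\<^sup>2)) = exp (\<theta> * u\<^sup>2) * exp (- u\<^sup>2)"
        by (simp add: algebra_simps flip: exp_add)
      then have "a * (exp (- ((1 - \<theta>) * u\<^sup>2)) * ((1 - \<theta>) * (2 * u))) + 2 * \<theta> * (exp (- u\<^sup>2) * (- (2 * u)))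
          = 2 * \<theta> * u * (exp (\<theta> * u\<^sup>2) - 1) * (2 * exp (- u\<^sup>2))"
        using \<open>\<theta> < 1\<close> by (simp add: a_def field_simps)
      ultimately show ?thesis
        by (rule DERIV_cong)
    qed
    have "(G \<longlongrightarrow> - a * 0 + 2 * \<theta> * 0) at_top"
      unfolding G_def using assms(3,4)
      by (intro tendsto_intros exp_neg_sq_tendsto_0[of 1, simplified] exp_neg_sq_tendsto_0) auto
    then show "(G \<longlongrightarrow> 0) at_top" by simp
  qed auto
  moreover have "0 - G 0 = 2 * \<theta>\<^sup>2 / (1 - \<theta>)"
    using \<open>\<theta> < 1\<close> by (simp add: G_def a_def field_simps power2_eq_square)
  ultimately show ?thesis by simp
qed

lemma integrable_exp_sq_half:
  assumes [measurable]: "X \<in> borel_measurable M" and "subgaussian M X 1"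
  shows "integrable M (\<lambda>\<omega>. exp ((X \<omega>)\<^sup>2 / 2))"
  using nn_integral_exp_sq_half_le[OF assms] by (intro integrableI_nonneg) (auto simp: le_less_trans)

lemma integrable_sq_of_subgaussian_unit:
  assumes [measurable]: "X \<in> borel_measurable M" and "subgaussian M X 1"
  shows "integrable M (\<lambda>\<omega>. (X \<omega>)\<^sup>2)"
proof (rule Bochner_Integration.integrable_bound[OF integrable_mult_right[OF integrable_exp_sq_half[OF assms], of 2]])
  have "(X \<omega>)\<^sup>2 \<le> 2 * exp ((X \<omega>)\<^sup>2 / 2)" for \<omega>
    using exp_ge_add_one_self[of "(X \<omega>)\<^sup>2 / 2"] by linarith
  then show "AE \<omega> in M. norm ((X \<omega>)\<^sup>2) \<le> norm (2 * exp ((X \<omega>)\<^sup>2 / 2))"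
    by simp
qed simp

lemma integrable_exp_mult_of_subgaussian_unit:
  assumes [measurable]: "X \<in> borel_measurable M" and "subgaussian M X 1"
  shows "integrable M (\<lambda>\<omega>. exp (l * X \<omega>))"
  using exp_mult_le_exp_sq_half[of l "X _"]
  by (intro Bochner_Integration.integrable_bound[OF integrable_mult_right[OF integrable_exp_sq_half[OF assms],
        of "exp (l\<^sup>2 / 2)"]]) auto

lemma subgaussian_unit_mgf_le_large:
  assumes [measurable]: "X \<in> borel_measurable M" and subg: "subgaussian M X 1"
    and "9/4 \<le> l\<^sup>2"
  shows "(\<integral>\<^sup>+\<omega>. ennreal (exp (l * X \<omega>)) \<partial>M) \<le> ennreal (exp (l\<^sup>2))"
proof -
  have "exp (l * X \<omega>) \<le> exp (l\<^sup>2 / 2) * exp ((X \<omega>)\<^sup>2 / 2)" for \<omega>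
    by (rule exp_mult_le_exp_sq_half)
  then have "(\<integral>\<^sup>+\<omega>. ennreal (exp (l * X \<omega>)) \<partial>M)
      \<le> (\<integral>\<^sup>+\<omega>. ennreal (exp (l\<^sup>2 / 2)) * ennreal (exp ((X \<omega>)\<^sup>2 / 2)) \<partial>M)"
    by (intro nn_integral_mono) (simp flip: ennreal_mult)
  also have "\<dots> = ennreal (exp (l\<^sup>2 / 2)) * (\<integral>\<^sup>+\<omega>. ennreal (exp ((X \<omega>)\<^sup>2 / 2)) \<partial>M)"
    by (rule nn_integral_cmult) simp
  also have "\<dots> \<le> ennreal (exp (l\<^sup>2 / 2)) * 3"
    using nn_integral_exp_sq_half_le[OF assms(1,2)] by (intro mult_left_mono) auto
  also have "\<dots> \<le> ennreal (exp (l\<^sup>2 / 2)) * ennreal (exp (l\<^sup>2 / 2))"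
  proof -
    have "exp (9/8) \<le> exp (l\<^sup>2 / 2)"
      using assms(3) by simp
    with three_le_exp_nine_eighths have "3 \<le> exp (l\<^sup>2 / 2)"
      by linarith
    then show ?thesis
      by (intro mult_left_mono) (auto simp: ennreal_leI[of 3, simplified])
  qed
  also have "\<dots> = ennreal (exp (l\<^sup>2))"
    by (simp flip: ennreal_mult exp_add)
  finally show ?thesis .
qed

lemma subgaussian_unit_mgf_le_small:
  assumes [measurable]: "X \<in> borel_measurable M" and subg: "subgaussian M X 1"
    and "integrable M X" "expectation X = 0" "expectation (\<lambda>\<omega>. (X \<omega>)\<^sup>2) \<le> 1"
    and "0 < l\<^sup>2" "l\<^sup>2 < 9/4"
  shows "(\<integral>\<^sup>+\<omega>. ennreal (exp (l * X \<omega>)) \<partial>M) \<le> ennreal (exp (l\<^sup>2))"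
proof -
  define \<theta> where "\<theta> = l\<^sup>2 / 4"
  have \<theta>: "0 < \<theta>" "\<theta> < 1" using assms(6,7) by (auto simp: \<theta>_def)
  define \<phi> where "\<phi> \<omega> = exp (\<theta> * (X \<omega>)\<^sup>2) - 1 - \<theta> * (X \<omega>)\<^sup>2" for \<omega>
  have \<phi>_nonneg: "\<phi> \<omega> \<ge> 0" for \<omega>
    using exp_ge_add_one_self[of "\<theta> * (X \<omega>)\<^sup>2"] unfolding \<phi>_def by linarith
  have \<phi>_bound: "(\<integral>\<^sup>+\<omega>. ennreal (\<phi> \<omega>) \<partial>M) \<le> ennreal (2 * \<theta>\<^sup>2 / (1 - \<theta>))"
    unfolding \<phi>_def by (rule nn_integral_exp_sq_remainder_le[OF assms(1,2) \<theta>])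
  have int_\<phi>: "integrable M \<phi>"
  proof (rule integrableI_nonneg)
    show "\<phi> \<in> borel_measurable M" unfolding \<phi>_def by measurable
  qed (use \<phi>_bound \<phi>_nonneg in \<open>auto simp: le_less_trans\<close>)
  have E\<phi>: "expectation \<phi> \<le> 2 * \<theta>\<^sup>2 / (1 - \<theta>)"
    using \<phi>_bound \<phi>_nonneg \<theta> by (simp add: nn_integral_eq_integral[OF int_\<phi>])
  have int_sq: "integrable M (\<lambda>\<omega>. (X \<omega>)\<^sup>2)"
    by (rule integrable_sq_of_subgaussian_unit[OF assms(1,2)])
  have int_exp: "integrable M (\<lambda>\<omega>. exp (l * X \<omega>))"
    by (rule integrable_exp_mult_of_subgaussian_unit[OF assms(1,2)])
  have pointwise: "exp (l * X \<omega>) \<le> 1 + l * X \<omega> + 4 * \<theta> * (X \<omega>)\<^sup>2 + 4 * \<phi> \<omega>" for \<omega>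
    using exp_le_add_exp_sq_quarter[of "l * X \<omega>"]
    by (simp add: \<phi>_def \<theta>_def algebra_simps)
  have "expectation (\<lambda>\<omega>. exp (l * X \<omega>))
      \<le> expectation (\<lambda>\<omega>. 1 + l * X \<omega> + 4 * \<theta> * (X \<omega>)\<^sup>2 + 4 * \<phi> \<omega>)"
    using assms(3) int_sq int_\<phi> pointwise by (intro integral_mono[OF int_exp]) auto
  also have "\<dots> = 1 + l * expectation X + 4 * \<theta> * expectation (\<lambda>\<omega>. (X \<omega>)\<^sup>2) + 4 * expectation \<phi>"
    using assms(3) int_sq int_\<phi> by (simp add: prob_space)
  also have "\<dots> \<le> 1 + 4 * \<theta> + 4 * (2 * \<theta>\<^sup>2 / (1 - \<theta>))"
    using assms(4,5) E\<phi> \<theta> by (intro add_mono) auto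
  also have "\<dots> = 1 + l\<^sup>2 + 2 * (l\<^sup>2)\<^sup>2 / (4 - l\<^sup>2)"
    using \<theta> by (simp add: \<theta>_def field_simps power2_eq_square)
  also have "\<dots> \<le> exp (l\<^sup>2)"
    using assms(7) by (intro rational_bound_le_exp) auto
  finally show ?thesis
    by (simp add: nn_integral_eq_integral[OF int_exp] ennreal_leI)
qed

(* For large l use exp(l X) \<le> exp(l^2/2) exp(X^2/2) and E exp(X^2/2) \<le> 3; for small l
   use exp y \<le> 1 + y + 4 (exp(y^2/4) - 1), so that the centring and E X^2 \<le> 1 enter. *)
lemma subgaussian_unit_mgf_le:
  assumes "X \<in> borel_measurable M" "subgaussian M X 1"
    and "integrable M X" "expectation X = 0" "expectation (\<lambda>\<omega>. (X \<omega>)\<^sup>2) \<le> 1"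
  shows "(\<integral>\<^sup>+\<omega>. ennreal (exp (l * X \<omega>)) \<partial>M) \<le> ennreal (exp (l\<^sup>2))"
proof -
  consider "l = 0" | "0 < l\<^sup>2" "l\<^sup>2 < 9/4" | "9/4 \<le> l\<^sup>2"
    by force
  then show ?thesis
  proof cases
    case 1
    then show ?thesis by (simp add: emeasure_space_1)
  qed (use assms subgaussian_unit_mgf_le_small subgaussian_unit_mgf_le_large in blast)+
qed

lemma subgaussian_mgf_le:
  assumes [measurable]: "X \<in> borel_measurable M" and "s > 0" and subg: "subgaussian M X s"
    and "integrable M X" "expectation X = 0" "variance X = s\<^sup>2"
  shows "(\<integral>\<^sup>+\<omega>. ennreal (exp (l * X \<omega>)) \<partial>M) \<le> ennreal (exp (l\<^sup>2 * s\<^sup>2))"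
proof -
  define Y where "Y = (\<lambda>\<omega>. X \<omega> / s)"
  have [measurable]: "Y \<in> borel_measurable M"
    unfolding Y_def by measurable
  have "subgaussian M Y 1"
    unfolding subgaussian_def
  proof (intro allI impI)
    fix t :: real assume "t \<ge> 0"
    have "{\<omega>\<in>space M. \<bar>Y \<omega>\<bar> \<ge> t} = {\<omega>\<in>space M. \<bar>X \<omega>\<bar> \<ge> t * s}"
      using \<open>s > 0\<close> by (auto simp: Y_def field_simps)
    moreover have "prob {\<omega>\<in>space M. \<bar>X \<omega>\<bar> \<ge> t * s} \<le> 2 * exp (- ((t * s)\<^sup>2) / s\<^sup>2)"
      using subg \<open>t \<ge> 0\<close> \<open>s > 0\<close> unfolding subgaussian_def by simp
    moreover have "(t * s)\<^sup>2 / s\<^sup>2 = t\<^sup>2"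
      using \<open>s > 0\<close> by (simp add: power_mult_distrib)
    ultimately show "prob {\<omega>\<in>space M. \<bar>Y \<omega>\<bar> \<ge> t} \<le> 2 * exp (- (t\<^sup>2) / 1\<^sup>2)"
      by simp
  qed
  moreover have "expectation (\<lambda>\<omega>. (Y \<omega>)\<^sup>2) = 1"
    using assms(5,6) \<open>s > 0\<close> by (simp add: Y_def power_divide)
  ultimately have "(\<integral>\<^sup>+\<omega>. ennreal (exp ((l * s) * Y \<omega>)) \<partial>M) \<le> ennreal (exp ((l * s)\<^sup>2))"
    using assms(4,5) by (intro subgaussian_unit_mgf_le) (simp_all add: Y_def)
  moreover have "(l * s) * Y \<omega> = l * X \<omega>" for \<omega>
    using \<open>s > 0\<close> by (simp add: Y_def)
  ultimately show ?thesis
    by (simp add: power_mult_distrib)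
qed

lemma indep_sum_tail_le:
  fixes Y :: "'i \<Rightarrow> 'a \<Rightarrow> real" and c v :: "'i \<Rightarrow> real"
  assumes "finite I" and indep: "indep_vars (\<lambda>_. borel) Y I"
    and mgf: "\<And>p l. p \<in> I \<Longrightarrow> (\<integral>\<^sup>+\<omega>. ennreal (exp (l * Y p \<omega>)) \<partial>M) \<le> ennreal (exp (l\<^sup>2 * v p))"
    and V: "(\<Sum>p\<in>I. (c p)\<^sup>2 * v p) \<le> V" "V > 0" and "r \<ge> 0"
  shows "prob {\<omega>\<in>space M. (\<Sum>p\<in>I. c p * Y p \<omega>) \<ge> r} \<le> exp (- r\<^sup>2 / (4 * V))"
proof (cases "r = 0")
  case False
  define l where "l = r / (2 * V)"
  have "l > 0" using False \<open>r \<ge> 0\<close> \<open>V > 0\<close> by (simp add: l_def)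
  have [measurable]: "p \<in> I \<Longrightarrow> Y p \<in> borel_measurable M" for p
    using indep unfolding indep_vars_def by auto
  have "emeasure M {\<omega>\<in>space M. (\<Sum>p\<in>I. c p * Y p \<omega>) \<ge> r}
      \<le> ennreal (exp (- l * r)) * (\<integral>\<^sup>+\<omega>\<in>space M. exp (l * (\<Sum>p\<in>I. c p * Y p \<omega>)) \<partial>M)"
    using \<open>l > 0\<close> by (intro Chernoff_ineq_nn_integral_ge) auto
  also have "(\<integral>\<^sup>+\<omega>\<in>space M. exp (l * (\<Sum>p\<in>I. c p * Y p \<omega>)) \<partial>M)
      = (\<integral>\<^sup>+\<omega>. (\<Prod>p\<in>I. ennreal (exp ((l * c p) * Y p \<omega>))) \<partial>M)"
    using \<open>finite I\<close> by (intro nn_integral_cong) (simp add: sum_distrib_left exp_sum prod_ennreal mult_ac)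
  also have "\<dots> = (\<Prod>p\<in>I. \<integral>\<^sup>+\<omega>. ennreal (exp ((l * c p) * Y p \<omega>)) \<partial>M)"
    by (intro indep_vars_nn_integral \<open>finite I\<close> indep_vars_compose2[OF indep]) auto
  also have "ennreal (exp (- l * r)) * \<dots> \<le> ennreal (exp (- l * r)) * (\<Prod>p\<in>I. ennreal (exp ((l * c p)\<^sup>2 * v p)))"
    by (intro mult_left_mono prod_mono_ennreal mgf) auto
  also have "\<dots> = ennreal (exp (- l * r) * (\<Prod>p\<in>I. exp ((l * c p)\<^sup>2 * v p)))"
    by (simp add: prod_ennreal prod_nonneg flip: ennreal_mult)
  also have "exp (- l * r) * (\<Prod>p\<in>I. exp ((l * c p)\<^sup>2 * v p)) = exp (l\<^sup>2 * (\<Sum>p\<in>I. (c p)\<^sup>2 * v p) - l * r)"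
    using \<open>finite I\<close>
    by (simp add: exp_diff exp_minus exp_sum sum_distrib_left field_simps)
  also have "\<dots> \<le> ennreal (exp (l\<^sup>2 * V - l * r))"
    using V(1) by (intro ennreal_leI) (simp add: mult_left_mono)
  also have "l\<^sup>2 * V - l * r = - r\<^sup>2 / (4 * V)"
    using \<open>V > 0\<close> by (simp add: l_def field_simps power2_eq_square)
  finally show ?thesis
    by (simp add: emeasure_eq_measure)
qed simp

lemma indep_abs_sum_tail_le:
  fixes Y :: "'i \<Rightarrow> 'a \<Rightarrow> real" and c v :: "'i \<Rightarrow> real"
  assumes "finite I" and indep: "indep_vars (\<lambda>_. borel) Y I"
    and mgf: "\<And>p l. p \<in> I \<Longrightarrow> (\<integral>\<^sup>+\<omega>. ennreal (exp (l * Y p \<omega>)) \<partial>M) \<le> ennreal (exp (l\<^sup>2 * v p))"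
    and V: "(\<Sum>p\<in>I. (c p)\<^sup>2 * v p) \<le> V" "V > 0" and "r \<ge> 0"
  shows "prob {\<omega>\<in>space M. \<bar>\<Sum>p\<in>I. c p * Y p \<omega>\<bar> \<ge> r} \<le> 2 * exp (- r\<^sup>2 / (4 * V))"
proof -
  have [measurable]: "p \<in> I \<Longrightarrow> Y p \<in> borel_measurable M" for p
    using indep unfolding indep_vars_def by auto
  have "{\<omega>\<in>space M. \<bar>\<Sum>p\<in>I. c p * Y p \<omega>\<bar> \<ge> r} =
        {\<omega>\<in>space M. (\<Sum>p\<in>I. c p * Y p \<omega>) \<ge> r} \<union> {\<omega>\<in>space M. (\<Sum>p\<in>I. (- c p) * Y p \<omega>) \<ge> r}"
    by (auto simp: sum_negf)
  also have "prob \<dots> \<le> prob {\<omega>\<in>space M. (\<Sum>p\<in>I. c p * Y p \<omega>) \<ge> r}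
                      + prob {\<omega>\<in>space M. (\<Sum>p\<in>I. (- c p) * Y p \<omega>) \<ge> r}"
    by (intro measure_Un_le) measurable
  also have "\<dots> \<le> exp (- r\<^sup>2 / (4 * V)) + exp (- r\<^sup>2 / (4 * V))"
    using assms by (intro add_mono indep_sum_tail_le) auto
  finally show ?thesis by simp
qed

lemma weighted_sample_avg_tail_le:
  fixes eps :: "real \<Rightarrow> nat \<Rightarrow> 'a \<Rightarrow> real" and w v :: "nat \<Rightarrow> real"
  assumes indep: "indep_vars (\<lambda>_. borel) (\<lambda>(y, j). eps y j) ({-1..1} \<times> UNIV)"
    and mgf: "\<And>i j l. i \<le> L \<Longrightarrow>
      (\<integral>\<^sup>+\<omega>. ennreal (exp (l * eps (cheb_pt L i) j \<omega>)) \<partial>M) \<le> ennreal (exp (l\<^sup>2 * v i))"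
    and V: "(\<Sum>i\<le>L. (w i)\<^sup>2 * v i / real (k i)) \<le> V" "V > 0" and "r \<ge> 0"
  shows "prob {\<omega>\<in>space M. r \<le> \<bar>\<Sum>i\<le>L. w i * sample_avg eps L k i \<omega>\<bar>} \<le> 2 * exp (- r\<^sup>2 / (4 * V))"
proof -
  define J where "J = Sigma {..L} (\<lambda>i. {..<k i})"
  define g where "g = (\<lambda>(i, j::nat). (cheb_pt L i, j))"
  define idx where "idx = the_inv_into {..L} (cheb_pt L)"
  define c where "c = (\<lambda>(y, j::nat). w (idx y) / real (k (idx y)))"
  define v' where "v' = (\<lambda>(y, j::nat). v (idx y))"
  have "inj_on g J"
    using inj_on_cheb_pt[of L] by (auto simp: g_def J_def inj_on_def)
  have idx: "idx (cheb_pt L i) = i" if "i \<le> L" for i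
    unfolding idx_def using inj_on_cheb_pt that by (simp add: the_inv_into_f_f)
  have sum_g_J: "(\<Sum>p\<in>g ` J. F p) = (\<Sum>i\<le>L. \<Sum>j<k i. F (cheb_pt L i, j))" for F :: "real \<times> nat \<Rightarrow> real"
    using sum.reindex[OF \<open>inj_on g J\<close>, of F]
    by (simp add: J_def g_def sum.Sigma split_def)
  have "(\<Sum>i\<le>L. w i * sample_avg eps L k i \<omega>) = (\<Sum>p\<in>g ` J. c p * (\<lambda>(y, j). eps y j) p \<omega>)" for \<omega>
    by (simp add: sum_g_J c_def idx sample_avg_def sum_distrib_left sum_divide_distrib mult_ac)
  moreover have "prob {\<omega>\<in>space M. \<bar>\<Sum>p\<in>g ` J. c p * (\<lambda>(y, j). eps y j) p \<omega>\<bar> \<ge> r} \<le> 2 * exp (- r\<^sup>2 / (4 * V))"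
  proof (rule indep_abs_sum_tail_le[where v = v'])
    show "finite (g ` J)" by (simp add: J_def)
    show "indep_vars (\<lambda>_. borel) (\<lambda>(y, j). eps y j) (g ` J)"
      by (rule indep_vars_subset[OF indep]) (auto simp: J_def g_def cheb_pt_def)
    show "(\<integral>\<^sup>+\<omega>. ennreal (exp (l * (\<lambda>(y, j). eps y j) p \<omega>)) \<partial>M) \<le> ennreal (exp (l\<^sup>2 * v' p))"
      if "p \<in> g ` J" for p :: "real \<times> nat" and l
      using that mgf by (auto simp: J_def g_def v'_def idx)
    have "(\<Sum>p\<in>g ` J. (c p)\<^sup>2 * v' p) = (\<Sum>i\<le>L. real (k i) * ((w i / real (k i))\<^sup>2 * v i))"
      by (simp add: sum_g_J c_def v'_def idx)
    also have "\<dots> = (\<Sum>i\<le>L. (w i)\<^sup>2 * v i / real (k i))"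
    proof (intro sum.cong refl)
      fix i
      show "real (k i) * ((w i / real (k i))\<^sup>2 * v i) = (w i)\<^sup>2 * v i / real (k i)"
        by (cases "k i = 0") (simp_all add: power2_eq_square)
    qed
    also have "\<dots> \<le> V"
      by (rule V(1))
    finally show "(\<Sum>p\<in>g ` J. (c p)\<^sup>2 * v' p) \<le> V" .
  qed (use V(2) \<open>r \<ge> 0\<close> in auto)
  ultimately show ?thesis by simp
qed

end

lemma proportional_allocation:
  fixes s :: "nat \<Rightarrow> real" and k :: "nat \<Rightarrow> nat"
  assumes alloc: "\<forall>i\<le>L. k i \<ge> 1 \<and> real (k i) = real N * (s i)\<^sup>2 / (\<Sum>l\<le>L. (s l)\<^sup>2)"
  shows "real N > 0" "(\<Sum>l\<le>L. (s l)\<^sup>2) > 0"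
    and "i \<le> L \<Longrightarrow> s i \<noteq> 0"
    and "i \<le> L \<Longrightarrow> (s i)\<^sup>2 / real (k i) = (\<Sum>l\<le>L. (s l)\<^sup>2) / real N"
proof -
  let ?S = "\<Sum>l\<le>L. (s l)\<^sup>2"
  have k_pos: "real (k i) > 0" "real (k i) = real N * (s i)\<^sup>2 / ?S" if "i \<le> L" for i
    using alloc that by auto
  show "real N > 0" "?S > 0"
    using k_pos[of 0] sum_nonneg[of "{..L}" "\<lambda>l. (s l)\<^sup>2"]
    by (auto simp: zero_less_divide_iff zero_less_mult_iff)
  show "s i \<noteq> 0" if "i \<le> L"
    using k_pos[OF that] by auto
  show "(s i)\<^sup>2 / real (k i) = ?S / real N" if "i \<le> L"
  proof -
    have "real (k i) \<noteq> 0"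
      using k_pos(1)[OF that] by simp
    moreover have "real (k i) * ?S = real N * (s i)\<^sup>2"
      using k_pos(2)[OF that] \<open>?S > 0\<close> by (simp add: field_simps)
    ultimately show ?thesis
      using \<open>real N > 0\<close> by (simp add: field_simps)
  qed
qed

lemma sum_trunc_weight_sq_allocation_le:
  fixes s :: "nat \<Rightarrow> real" and k :: "nat \<Rightarrow> nat"
  assumes alloc: "\<forall>i\<le>L. k i \<ge> 1 \<and> real (k i) = real N * (s i)\<^sup>2 / (\<Sum>l\<le>L. (s l)\<^sup>2)"
    and "n < L" "\<bar>x\<bar> \<le> 1"
  shows "(\<Sum>i\<le>L. (trunc_weight L n x i)\<^sup>2 * (s i)\<^sup>2 / real (k i))
       \<le> 2 * (real n + 1) / real L * ((\<Sum>l\<le>L. (s l)\<^sup>2) / real N)"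
proof -
  let ?w = "trunc_weight L n x" and ?S = "\<Sum>l\<le>L. (s l)\<^sup>2"
  have "(\<Sum>i\<le>L. (?w i)\<^sup>2 * (s i)\<^sup>2 / real (k i)) = (\<Sum>i\<le>L. (?w i)\<^sup>2 * (?S / real N))"
    using proportional_allocation(4)[OF alloc]
    by (intro sum.cong refl) (simp flip: times_divide_eq_right)
  also have "\<dots> = (\<Sum>i\<le>L. (?w i)\<^sup>2) * (?S / real N)"
    by (rule sum_distrib_right[symmetric])
  also have "\<dots> \<le> 2 * (real n + 1) / real L * (?S / real N)"
    using sum_trunc_weight_sq_le[of L n x] proportional_allocation(1,2)[OF alloc] assms(2,3)
    by (intro mult_right_mono) auto
  finally show ?thesis .
qed

lemma (in prob_space) trunc_noise_tail_le:
  fixes eps :: "real \<Rightarrow> nat \<Rightarrow> 'a \<Rightarrow> real" and \<sigma> :: "real \<Rightarrow> real"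
  assumes meas: "\<forall>y\<in>{-1..1}. \<forall>j. eps y j \<in> borel_measurable M"
    and indep: "indep_vars (\<lambda>_. borel) (\<lambda>(y, j). eps y j) ({-1..1} \<times> UNIV)"
    and moments: "\<forall>y\<in>{-1..1}. \<forall>j. integrable M (eps y j) \<and> expectation (eps y j) = 0
                                 \<and> variance (eps y j) = (\<sigma> y)\<^sup>2"
    and subg: "\<forall>i\<le>Nh. \<forall>j. subgaussian M (eps (cheb_pt Nh i) j) (\<sigma> (cheb_pt Nh i))"
    and \<sigma>_nonneg: "\<forall>y\<in>{-1..1}. \<sigma> y \<ge> 0"
    and alloc: "\<forall>i\<le>Nh. k i \<ge> 1 \<and>
                  real (k i) = real N * (\<sigma> (cheb_pt Nh i))\<^sup>2 / (\<Sum>l\<le>Nh. (\<sigma> (cheb_pt Nh l))\<^sup>2)"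
    and "n < Nh" "\<bar>x\<bar> \<le> 1" "t > 0"
  shows "prob {\<omega>\<in>space M. 2 * t * sqrt (\<Sum>l\<le>Nh. (\<sigma> (cheb_pt Nh l))\<^sup>2) / sqrt (real N * real Nh) * sqrt (real n + 1)
                          \<le> \<bar>\<Sum>i\<le>Nh. trunc_weight Nh n x i * sample_avg eps Nh k i \<omega>\<bar>}
         \<le> 2 * exp (- t\<^sup>2 / 2)"
proof -
  define S where "S = (\<Sum>l\<le>Nh. (\<sigma> (cheb_pt Nh l))\<^sup>2)"
  define V where "V = 2 * (real n + 1) / real Nh * (S / real N)"
  let ?w = "trunc_weight Nh n x"
  have "Nh > 0" using \<open>n < Nh\<close> by simp
  have "real N > 0" "S > 0"
    using proportional_allocation(1,2)[OF alloc] by (simp_all add: S_def)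
  then have "V > 0" using \<open>Nh > 0\<close> by (simp add: V_def)
  have mgf: "(\<integral>\<^sup>+\<omega>. ennreal (exp (l * eps (cheb_pt Nh i) j \<omega>)) \<partial>M) \<le> ennreal (exp (l\<^sup>2 * (\<sigma> (cheb_pt Nh i))\<^sup>2))"
    if "i \<le> Nh" for i j l
  proof (rule subgaussian_mgf_le)
    have "\<sigma> (cheb_pt Nh i) \<ge> 0"
      using \<sigma>_nonneg cheb_pt_in_interval by blast
    then show "\<sigma> (cheb_pt Nh i) > 0"
      using proportional_allocation(3)[OF alloc that] by simp
  qed (use meas moments subg that cheb_pt_in_interval[of Nh i] in blast)+
  have "(\<Sum>i\<le>Nh. (?w i)\<^sup>2 * (\<sigma> (cheb_pt Nh i))\<^sup>2 / real (k i)) \<le> V"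
    unfolding V_def S_def by (rule sum_trunc_weight_sq_allocation_le[OF alloc \<open>n < Nh\<close> \<open>\<bar>x\<bar> \<le> 1\<close>])
  then have tail: "prob {\<omega>\<in>space M. 2 * t * sqrt S / sqrt (real N * real Nh) * sqrt (real n + 1)
                                 \<le> \<bar>\<Sum>i\<le>Nh. ?w i * sample_avg eps Nh k i \<omega>\<bar>}
      \<le> 2 * exp (- ((2 * t * sqrt S / sqrt (real N * real Nh) * sqrt (real n + 1))\<^sup>2) / (4 * V))"
    using mgf \<open>V > 0\<close> \<open>t > 0\<close> \<open>S > 0\<close> by (intro weighted_sample_avg_tail_le[OF indep]) auto
  define Q where "Q = S * (real n + 1) / (real N * real Nh)"
  have "Q > 0"
    using \<open>real N > 0\<close> \<open>S > 0\<close> \<open>Nh > 0\<close> by (simp add: Q_def)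
  moreover have "(2 * t * sqrt S / sqrt (real N * real Nh) * sqrt (real n + 1))\<^sup>2 = 4 * t\<^sup>2 * Q"
    using \<open>real N > 0\<close> \<open>S > 0\<close> \<open>Nh > 0\<close> by (simp add: Q_def power_mult_distrib power_divide)
  moreover have "4 * V = 8 * Q"
    by (simp add: V_def Q_def field_simps)
  ultimately have "- ((2 * t * sqrt S / sqrt (real N * real Nh) * sqrt (real n + 1))\<^sup>2) / (4 * V) = - (t\<^sup>2) / 2"
    by simp
  with tail show ?thesis
    by (simp only: S_def)
qed

theorem theorem1:
  fixes M :: "'a measure" and f \<sigma> :: "real \<Rightarrow> real"
    and eps :: "real \<Rightarrow> nat \<Rightarrow> 'a \<Rightarrow> real"
    and N Nh n :: nat and k :: "nat \<Rightarrow> nat" and x t :: real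
  assumes "prob_space M"
    and "continuous_on {-1..1} f"
    and "\<forall>y\<in>{-1..1}. \<sigma> y \<ge> 0"
    and "\<forall>y\<in>{-1..1}. \<forall>j. eps y j \<in> borel_measurable M"
    and "prob_space.indep_vars M (\<lambda>_. borel) (\<lambda>(y, j). eps y j) ({-1..1} \<times> UNIV)"
    and "\<forall>y\<in>{-1..1}. \<forall>j. distr M borel (eps y j) = distr M borel (eps y 0)"
    and "\<forall>y\<in>{-1..1}. \<forall>j. integrable M (eps y j) \<and> (\<integral>\<omega>. eps y j \<omega> \<partial>M) = 0
                         \<and> prob_space.variance M (eps y j) = (\<sigma> y)^2"
    and "\<forall>i\<le>Nh. \<forall>j. subgaussian M (eps (cheb_pt Nh i) j) (\<sigma> (cheb_pt Nh i))"
    and "n < Nh"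
    and "\<forall>i\<le>Nh. k i \<ge> 1 \<and>
           real (k i) = real N * (\<sigma> (cheb_pt Nh i))^2 / (\<Sum>l\<le>Nh. (\<sigma> (cheb_pt Nh l))^2)"
    and "x \<in> {-1..1}" and "t > 0"
  shows "measure M {\<omega> \<in> space M.
           \<bar>trunc_approx Nh n (\<lambda>i. f (cheb_pt Nh i) + sample_avg eps Nh k i \<omega>) x - f x\<bar>
           > 2 * t * sqrt (\<Sum>l\<le>Nh. (\<sigma> (cheb_pt Nh l))^2) / sqrt (real N * real Nh) * sqrt (real n + 1)
             + (sqrt (8 * (real n + 1)) + 1) * sup_dist f (best_approx f n)}
         \<le> 2 * exp (- (t^2) / 2)"
proof -
  interpret prob_space M by (rule assms(1))
  let ?w = "trunc_weight Nh n x"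
  let ?A = "2 * t * sqrt (\<Sum>l\<le>Nh. (\<sigma> (cheb_pt Nh l))\<^sup>2) / sqrt (real N * real Nh) * sqrt (real n + 1)"
  let ?R = "(sqrt (8 * (real n + 1)) + 1) * sup_dist f (best_approx f n)"
  let ?noise = "\<lambda>\<omega>. \<Sum>i\<le>Nh. ?w i * sample_avg eps Nh k i \<omega>"
  let ?bias = "(\<Sum>i\<le>Nh. f (cheb_pt Nh i) * ?w i) - f x"
  have [measurable]: "eps (cheb_pt Nh i) j \<in> borel_measurable M" for i j
    using assms(4) cheb_pt_in_interval by blast
  have split: "trunc_approx Nh n (\<lambda>i. f (cheb_pt Nh i) + sample_avg eps Nh k i \<omega>) x - f x = ?noise \<omega> + ?bias"
    for \<omega>
    using assms(9) by (simp add: trunc_approx_eq_sum_weights algebra_simps sum.distrib)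
  have "\<bar>?bias\<bar> \<le> (sqrt (2 * (real n + 1)) + 1) * sup_dist f (best_approx f n)"
    using assms(2,9,11) by (intro trunc_interp_error_le degree_best_approx) auto
  also have "\<dots> \<le> ?R"
    by (intro mult_right_mono sup_dist_nonneg[OF assms(2)]) simp
  finally have "?A \<le> \<bar>?noise \<omega>\<bar>" if "?A + ?R < \<bar>?noise \<omega> + ?bias\<bar>" for \<omega>
    using that abs_triangle_ineq[of "?noise \<omega>" ?bias] by linarith
  then have "{\<omega>\<in>space M. \<bar>trunc_approx Nh n (\<lambda>i. f (cheb_pt Nh i) + sample_avg eps Nh k i \<omega>) x - f x\<bar> > ?A + ?R}
      \<subseteq> {\<omega>\<in>space M. ?A \<le> \<bar>?noise \<omega>\<bar>}"
    unfolding split by blast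
  moreover have "{\<omega>\<in>space M. ?A \<le> \<bar>?noise \<omega>\<bar>} \<in> sets M"
    unfolding sample_avg_def by measurable
  ultimately have "measure M {\<omega>\<in>space M. \<bar>trunc_approx Nh n (\<lambda>i. f (cheb_pt Nh i) + sample_avg eps Nh k i \<omega>) x - f x\<bar> > ?A + ?R}
      \<le> prob {\<omega>\<in>space M. ?A \<le> \<bar>?noise \<omega>\<bar>}"
    by (rule finite_measure_mono)
  also have "\<dots> \<le> 2 * exp (- t\<^sup>2 / 2)"
    using assms(11) by (intro trunc_noise_tail_le[OF assms(4,5,7,8,3,10,9) _ assms(12)]) auto
  finally show ?thesis by simp
qed

end
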